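(* Let $k,k_1,\dots,k_N\in\mathbb{R}^3$, $t,t_1,\dots,t_N\in\mathbb{R}$, $\varepsilon_1,\dots,\varepsilon_N\in\{0,1\}$, and write $a^{0}_\lambda=a_\lambda$, $a^{1}_\lambda=a^{\dagger}_\lambda$. Let $m_1<\dots<m_J$ be the positions $m$ with $\varepsilon_m=0$ (annihilators) and $m'_1<\dots<m'_I$ the positions with $\varepsilon_m=1$ (creators), $I+J=N$. Then $$ a_\lambda(t,k)\,a^{\varepsilon_1}_\lambda(t_1,k_1)\cdots a^{\varepsilon_N}_\lambda(t_N,k_N) -\prod_{i=1}^{J} q_{\lambda}^{-1}(t-t_{m_i},k\cdot k_{m_i})\prod_{j=1}^{I} q_{\lambda}(t-t_{m'_j},k\cdot k_{m'_j})\, a^{\varepsilon_1}_\lambda(t_1,k_1)\cdots a^{\varepsilon_N}_\lambda(t_N,k_N)\,a_\lambda(t,k) $$ $$ =\sum_{j=1}^{I}\delta(k-k_{m'_j})\,\frac{1}{\lambda^2}\,q_{\lambda}\big(t-t_{m'_j},\tilde\omega(k)+k\cdot p\big)\prod_{m_i<m'_j}q_{\lambda}(t-t_{m'_j},k\cdot k_{m_i})\prod_{m'_i<m'_j}q^{-1}_{\lambda}(t-t_{m'_j},k\cdot k_{m'_i}) $$ $$ \times\prod_{m_i<m'_j}q_{\lambda}^{-1}(t-t_{m_i},k\cdot k_{m_i})\prod_{m'_i<m'_j}q_{\lambda}(t-t_{m'_i},k\cdot k_{m'_i})\; a^{\varepsilon_1}_\lambda(t_1,k_1)\cdots\widehat{a^{\dagger}_\lambda(t_{m'_j},k_{m'_j})}\cdots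 a^{\varepsilon_N}_\lambda(t_N,k_N), $$ where the hat means that the factor $a^{\dagger}_\lambda(t_{m'_j},k_{m'_j})$ is omitted from the product, and the operator-valued factors depending on $p$ stand to the left of the product of field operators.
   Context: A single non-relativistic particle in $\mathbb{R}^3$ has position $q=(q_1,q_2,q_3)$ and momentum $p=(p_1,p_2,p_3)$ with $[q_j,p_n]=i\delta_{jn}$. A boson field is given by operators $a_j(k),a_j^\dagger(k)$, $j=1,2,3$, $k\in\mathbb{R}^3$, with $[a_j(k),a_n^\dagger(k')]=\delta_{jn}\delta(k-k')$, $[a_j(k),a_n(k')]=0$. Let $\omega(k)=|k|$, $\tilde\omega(k)=\omega(k)+\tfrac12 k^2$, $H_0=\int\omega(k)a^\dagger(k)a(k)\,d^3k+\tfrac12 p^2$, and $kq=\sum_j k_jq_j$, $k\cdot p=\sum_j k_jp_j$. For $\lambda>0$ define the rescaled (collective) field operators $$a_{\lambda}(t,k)=\frac{1}{\lambda}e^{i\frac{t}{\lambda^2}H_0}e^{-ikq}a(k)e^{-i\frac{t}{\lambda^2}H_0}=\frac{1}{\lambda}e^{-i\frac{t}{\lambda^2}(\tilde\omega(k)+k\cdot p)}e^{-ikq}a(k),$$ and $a^\dagger_\lambda(t,k)$ its adjoint, and $q_\lambda(t,x)=e^{-i\frac{t}{\lambda^2}x}$ (where $x$ may be a function of the operator $p$). Polarization indices are suppressed: each field operator carries an index $j\in\{1,2,3\}$ and each $\delta(k-k')$ pairing an annihilator with index $j$ and a creator with index $n$ stands for $\delta(k-k')\delta_{jn}$. *)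

theory Defs
  imports "HOL-Analysis.Analysis"
begin

text \<open>Operators live in an abstract, non-commutative ring with unit 'A.
  F f  is the operator f(p) (functional calculus of the momentum p, f : R^3 -> C),
  W k  is e^{-ikq}, b j k is a_j(k), bd j k is a_j^dagger(k), and
  D k k' is the (central, c-number) distribution delta(k-k').\<close>

definition omega_t :: "real^3 \<Rightarrow> real" where
  "omega_t k = norm k + (norm k)^2 / 2"

definition qsc :: "real \<Rightarrow> real \<Rightarrow> real \<Rightarrow> complex" where
  "qsc lam t x = exp (- \<i> * complex_of_real (t / lam^2 * x))"

definition ccr_model ::
  "((real^3 \<Rightarrow> complex) \<Rightarrow> 'A::ring_1) \<Rightarrow> (real^3 \<Rightarrow> 'A) \<Rightarrow>
   (3 \<Rightarrow> real^3 \<Rightarrow> 'A) \<Rightarrow> (3 \<Rightarrow> real^3 \<Rightarrow> 'A) \<Rightarrow> (real^3 \<Rightarrow> real^3 \<Rightarrow> 'A) \<Rightarrow> bool" where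
  "ccr_model F W b bd D \<longleftrightarrow>
     \<comment> \<open>functional calculus of p is a unital ring homomorphism\<close>
     (\<forall>f g. F (\<lambda>P. f P * g P) = F f * F g) \<and>
     (\<forall>f g. F (\<lambda>P. f P + g P) = F f + F g) \<and>
     F (\<lambda>P. 1) = 1 \<and>
     \<comment> \<open>e^{-ikq} is a unitary group with e^{-ikq} f(p) = f(p+k) e^{-ikq}\<close>
     W 0 = 1 \<and>
     (\<forall>k k'. W (k + k') = W k * W k') \<and>
     (\<forall>k f. W k * F f = F (\<lambda>P. f (P + k)) * W k) \<and>
     \<comment> \<open>particle operators commute with field operators\<close>
     (\<forall>k j k'. W k * b j k' = b j k' * W k) \<and>
     (\<forall>k j k'. W k * bd j k' = bd j k' * W k) \<and>
     (\<forall>f j k. F f * b j k = b j k * F f) \<and>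
     (\<forall>f j k. F f * bd j k = bd j k * F f) \<and>
     \<comment> \<open>canonical commutation relations\<close>
     (\<forall>j k n k'. b j k * bd n k' - bd n k' * b j k = (if j = n then D k k' else 0)) \<and>
     (\<forall>j k n k'. b j k * b n k' = b n k' * b j k) \<and>
     (\<forall>j k n k'. bd j k * bd n k' = bd n k' * bd j k) \<and>
     \<comment> \<open>delta(k-k') is a c-number supported on k = k'\<close>
     (\<forall>k k' X. D k k' * X = X * D k k') \<and>
     (\<forall>k k' G. D k k' * G k' = D k k' * G k)"

definition aL ::
  "((real^3 \<Rightarrow> complex) \<Rightarrow> 'A::ring_1) \<Rightarrow> (real^3 \<Rightarrow> 'A) \<Rightarrow> (3 \<Rightarrow> real^3 \<Rightarrow> 'A) \<Rightarrow>
   real \<Rightarrow> real \<Rightarrow> real^3 \<Rightarrow> 3 \<Rightarrow> 'A" where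
  "aL F W b lam t k j =
     F (\<lambda>P. complex_of_real (1 / lam)) * F (\<lambda>P. qsc lam t (omega_t k + k \<bullet> P)) * W k * b j k"

definition adL ::
  "((real^3 \<Rightarrow> complex) \<Rightarrow> 'A::ring_1) \<Rightarrow> (real^3 \<Rightarrow> 'A) \<Rightarrow> (3 \<Rightarrow> real^3 \<Rightarrow> 'A) \<Rightarrow>
   real \<Rightarrow> real \<Rightarrow> real^3 \<Rightarrow> 3 \<Rightarrow> 'A" where
  "adL F W bd lam t k j =
     F (\<lambda>P. complex_of_real (1 / lam)) * bd j k * W (- k) *
     F (\<lambda>P. inverse (qsc lam t (omega_t k + k \<bullet> P)))"

text \<open>a^eps_lambda: eps = True means creator (eps = 1), False annihilator (eps = 0).\<close>
definition fop ::
  "((real^3 \<Rightarrow> complex) \<Rightarrow> 'A::ring_1) \<Rightarrow> (real^3 \<Rightarrow> 'A) \<Rightarrow> (3 \<Rightarrow> real^3 \<Rightarrow> 'A) \<Rightarrow>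
   (3 \<Rightarrow> real^3 \<Rightarrow> 'A) \<Rightarrow> real \<Rightarrow> bool \<Rightarrow> real \<Rightarrow> real^3 \<Rightarrow> 3 \<Rightarrow> 'A" where
  "fop F W b bd lam eps t k j = (if eps then adL F W bd lam t k j else aL F W b lam t k j)"

end

theory Submission
  imports Defs
begin

text \<open>Each field operator a^e_lambda(t_m,k_m) shifts the momentum p by fop_shift e k_m, namely by k_m
  for an annihilator and by -k_m for a creator. Hence moving a_lambda(t,k) to the right past it
  produces the phase q_lambda^{-1}(t - t_m, k . fop_shift e k_m), and, past a creator, the canonical
  commutation relation adds the contraction
  delta(k - k_m) lambda^{-2} q_lambda(t - t_m, omega~(k) + k.p). Since the phases are c-numbers,
  moving a_lambda(t,k) through the whole product is a twisted Leibniz rule: all phases are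
  collected on the left, plus one contraction term per creator. The p-dependent factor of that
  term is finally moved to the left past the preceding field operators, which shifts p by the sum
  of their momenta and produces the phases q_lambda(t - t_c, k . fop_shift e k_m), m < c.\<close>

lemma qsc_add: "qsc l t (x + y) = qsc l t x * qsc l t y"
  by (simp add: qsc_def distrib_left flip: exp_add)

lemma qsc_minus: "qsc l t (- x) = inverse (qsc l t x)"
  by (simp add: qsc_def flip: exp_minus)

lemma qsc_diff: "qsc l t (x - y) = qsc l t x * inverse (qsc l t y)"
  using qsc_add[of l t x "- y"] by (simp add: qsc_minus)

lemma qsc_diff_time: "qsc l (t - t') x = qsc l t x * inverse (qsc l t' x)"
  by (simp add: qsc_def diff_divide_distrib algebra_simps flip: exp_minus exp_add)

lemma qsc_nonzero: "qsc l t x \<noteq> 0"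
  by (simp add: qsc_def)

lemma qsc_sum: "qsc l t (sum f S) = (\<Prod>m\<in>S. qsc l t (f m))"
proof (cases "finite S")
  case True
  then show ?thesis
    by (induction S rule: finite_induct) (simp_all add: qsc_add, simp add: qsc_def)
qed (simp add: qsc_def)

lemma prod_list_commute:
  fixes y :: "'a::monoid_mult"
  assumes "\<And>x. x \<in> set xs \<Longrightarrow> x * y = y * x"
  shows "prod_list xs * y = y * prod_list xs"
  using assms by (induction xs) (simp_all, metis mult.assoc)

lemma twisted_commutator_prod_list:
  fixes X :: "'a::ring_1" and A \<sigma> E :: "nat \<Rightarrow> 'a"
  assumes "\<And>m. m < N \<Longrightarrow> X * A m = \<sigma> m * A m * X + E m"
    and "\<And>m m'. m' < m \<Longrightarrow> m < N \<Longrightarrow> A m' * \<sigma> m = \<sigma> m * A m'"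
  shows "X * prod_list (map A [0..<N]) =
      prod_list (map \<sigma> [0..<N]) * prod_list (map A [0..<N]) * X
    + (\<Sum>c<N. prod_list (map \<sigma> [0..<c]) * prod_list (map A [0..<c]) * E c
              * prod_list (map A [Suc c..<N]))"
  using assms
proof (induction N)
  case 0
  then show ?case by simp
next
  case (Suc N)
  let ?S = "prod_list (map \<sigma> [0..<N])" and ?P = "prod_list (map A [0..<N])"
    and ?R = "\<lambda>n. \<Sum>c<N. prod_list (map \<sigma> [0..<c]) * prod_list (map A [0..<c]) * E c
                   * prod_list (map A [Suc c..<n])"
  have P_twist: "?P * \<sigma> N = \<sigma> N * ?P"
    by (rule prod_list_commute) (auto intro: Suc.prems(2))
  have "X * (?P * A N) = (?S * ?P * X + ?R N) * A N"
    using Suc by (simp flip: mult.assoc)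
  also have "\<dots> = ?S * ?P * (\<sigma> N * A N * X + E N) + ?R N * A N"
    using Suc.prems(1) by (simp add: distrib_right mult.assoc)
  also have "\<dots> = ?S * \<sigma> N * (?P * A N) * X + ?S * ?P * E N + ?R (Suc N)"
  proof -
    have "?S * ?P * (\<sigma> N * A N * X) = ?S * \<sigma> N * (?P * A N) * X"
      by (simp add: mult.assoc) (simp flip: mult.assoc add: P_twist)
    moreover have "?R N * A N = ?R (Suc N)"
      by (simp add: sum_distrib_right mult.assoc)
    ultimately show ?thesis
      by (simp add: distrib_left)
  qed
  finally show ?case
    by simp
qed

lemma filter_upt_neq:
  assumes "c < N"
  shows "filter (\<lambda>m. m \<noteq> c) [0..<N] = [0..<c] @ [Suc c..<N]"
proof -
  have "[0..<N] = [0..<c] @ [c..<N]"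
    using upt_add_eq_append[of 0 c "N - c"] assms by simp
  also have "[c..<N] = c # [Suc c..<N]"
    using assms by (rule upt_conv_Cons)
  finally show ?thesis
    by (simp add: filter_id_conv)
qed

lemma mult_assoc_rewrite: "a * b = c \<Longrightarrow> a * (b * x) = c * (x::'a::semigroup_mult)"
  by (simp flip: mult.assoc)

definition fop_shift :: "bool \<Rightarrow> real^3 \<Rightarrow> real^3" where
  "fop_shift e k = (if e then - k else k)"

lemma qsc_fop_shift:
  "qsc l \<tau> (k \<bullet> fop_shift e k') = (if e then inverse (qsc l \<tau> (k \<bullet> k')) else qsc l \<tau> (k \<bullet> k'))"
  by (simp add: fop_shift_def qsc_minus)

lemma prod_qsc_fop_shift:
  assumes "finite S"
  shows "(\<Prod>m\<in>S. qsc l (\<tau> m) (k \<bullet> fop_shift (es m) (ks m))) =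
      (\<Prod>m\<in>S \<inter> - Collect es. qsc l (\<tau> m) (k \<bullet> ks m))
    * (\<Prod>m\<in>S \<inter> Collect es. inverse (qsc l (\<tau> m) (k \<bullet> ks m)))"
    and "(\<Prod>m\<in>S. inverse (qsc l (\<tau> m) (k \<bullet> fop_shift (es m) (ks m)))) =
      (\<Prod>m\<in>S \<inter> - Collect es. inverse (qsc l (\<tau> m) (k \<bullet> ks m)))
    * (\<Prod>m\<in>S \<inter> Collect es. qsc l (\<tau> m) (k \<bullet> ks m))"
  using assms by (simp_all add: qsc_fop_shift if_distrib prod.If_cases mult.commute)

context
  fixes F :: "(real^3 \<Rightarrow> complex) \<Rightarrow> 'A::ring_1" and W b bd D
  assumes ccr: "ccr_model F W b bd D"
begin

lemma F_mult: "F f * F g = F (\<lambda>P. f P * g P)"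
  and F_one: "F (\<lambda>P. 1) = 1"
  and W_zero: "W 0 = 1"
  and W_mult: "W k * W k' = W (k + k')"
  and W_F: "W k * F f = F (\<lambda>P. f (P + k)) * W k"
  and b_F: "b j k * F f = F f * b j k"
  and bd_F: "bd j k * F f = F f * bd j k"
  and b_W: "b j k * W k' = W k' * b j k"
  and W_bd: "W k * bd j k' = bd j k' * W k"
  and b_commute: "b j k * b n k' = b n k' * b j k"
  and b_bd: "b j k * bd n k' = bd n k' * b j k + (if j = n then D k k' else 0)"
  using ccr unfolding ccr_model_def by (simp_all add: diff_eq_eq)

lemma D_central: "D k k' * X = X * D k k'"
  and D_diagonal: "D k k' * G k' = D k k' * G k"
  using ccr unfolding ccr_model_def by blast+

lemma F_cong_mult: "(\<And>P. f P = g P) \<Longrightarrow> F f * X = F g * X"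
  by (metis ext)

lemmas normal_order_simps = mult.assoc
  F_mult W_mult W_F b_F bd_F b_W W_bd
  F_mult[THEN mult_assoc_rewrite] W_mult[THEN mult_assoc_rewrite] W_F[THEN mult_assoc_rewrite]
  b_F[THEN mult_assoc_rewrite] bd_F[THEN mult_assoc_rewrite] b_W[THEN mult_assoc_rewrite]
  W_bd[THEN mult_assoc_rewrite]

lemma aL_mult_F: "aL F W b lam t k j * F g = F (\<lambda>P. g (P + k)) * aL F W b lam t k j"
  unfolding aL_def normal_order_simps by (simp add: mult.commute)

lemma adL_mult_F: "adL F W bd lam t k j * F g = F (\<lambda>P. g (P - k)) * adL F W bd lam t k j"
  unfolding adL_def normal_order_simps by (simp add: mult_ac)

lemma aL_commute_aL:
  "aL F W b lam t k j * aL F W b lam t' k' j' =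
   F (\<lambda>P. inverse (qsc lam (t - t') (k \<bullet> k'))) * aL F W b lam t' k' j' * aL F W b lam t k j"
  unfolding aL_def normal_order_simps b_commute[of j k] add.commute[of k]
  by (rule F_cong_mult)
    (simp add: inner_add_right inner_commute qsc_add qsc_diff_time qsc_nonzero field_simps)

lemma aL_commute_adL:
  "aL F W b lam t k j * adL F W bd lam t' k' j' =
     F (\<lambda>P. qsc lam (t - t') (k \<bullet> k')) * adL F W bd lam t' k' j' * aL F W b lam t k j
   + (if j = j' then D k k' else 0) * F (\<lambda>P. complex_of_real (1 / lam^2))
     * F (\<lambda>P. qsc lam (t - t') (omega_t k + k \<bullet> P))"
proof -
  define \<delta> where "\<delta> = (if j = j' then D k k' else 0)"
  define G where "G = F (\<lambda>P. complex_of_real (1 / lam)) * F (\<lambda>P. qsc lam t (omega_t k + k \<bullet> P)) * W k"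
  define H where "H = (\<lambda>k'. F (\<lambda>P. complex_of_real (1 / lam)) * W (- k')
                         * F (\<lambda>P. inverse (qsc lam t' (omega_t k' + k' \<bullet> P))))"
  have "aL F W b lam t k j * adL F W bd lam t' k' j' = G * (b j k * bd j' k') * H k'"
    by (simp add: aL_def adL_def G_def H_def normal_order_simps)
  also have "\<dots> = G * (bd j' k' * b j k) * H k' + G * \<delta> * H k'"
    by (simp add: b_bd \<delta>_def distrib_left distrib_right)
  also have "G * (bd j' k' * b j k) * H k'
      = F (\<lambda>P. qsc lam (t - t') (k \<bullet> k')) * adL F W bd lam t' k' j' * aL F W b lam t k j"
    unfolding aL_def adL_def G_def H_def normal_order_simps add.commute[of k]
    by (rule F_cong_mult)
      (simp add: inner_add_right inner_diff_right inner_commute qsc_add qsc_diff qsc_minus qsc_diff_time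
        qsc_nonzero field_simps)
  also have "G * \<delta> * H k' = \<delta> * (G * H k')"
    unfolding \<delta>_def by (simp add: mult.assoc D_central[of k k' "H k'"] D_central[of k k' "G * H k'"])
  \<comment> \<open>delta(k - k') allows k' to be replaced by k, so that W k * W (- k) = 1\<close>
  also have "\<delta> * (G * H k') = \<delta> * (G * H k)"
    unfolding \<delta>_def by (simp add: D_diagonal[where G = "\<lambda>k'. G * H k'"])
  also have "G * H k = F (\<lambda>P. complex_of_real (1 / lam^2)) * F (\<lambda>P. qsc lam (t - t') (omega_t k + k \<bullet> P))"
    unfolding G_def H_def normal_order_simps
    by (simp add: W_zero qsc_diff_time power2_eq_square)
  finally show ?thesis
    by (simp add: \<delta>_def mult.assoc)
qed

lemma fop_mult_F:
  "fop F W b bd lam e t k j * F g = F (\<lambda>P. g (P + fop_shift e k)) * fop F W b bd lam e t k j"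
  by (simp add: fop_def fop_shift_def aL_mult_F adL_mult_F)

lemma aL_commute_fop:
  "aL F W b lam t k j * fop F W b bd lam e t' k' j' =
     F (\<lambda>P. inverse (qsc lam (t - t') (k \<bullet> fop_shift e k'))) * fop F W b bd lam e t' k' j'
     * aL F W b lam t k j
   + (if e then (if j = j' then D k k' else 0) * F (\<lambda>P. complex_of_real (1 / lam^2))
       * F (\<lambda>P. qsc lam (t - t') (omega_t k + k \<bullet> P)) else 0)"
  by (cases e) (simp_all add: fop_def fop_shift_def aL_commute_aL aL_commute_adL qsc_minus)

lemma prod_list_fop_mult_F:
  "prod_list (map (\<lambda>m. fop F W b bd lam (es m) (ts m) (ks m) (js m)) xs) * F g =
   F (\<lambda>P. g (P + (\<Sum>m\<leftarrow>xs. fop_shift (es m) (ks m))))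
   * prod_list (map (\<lambda>m. fop F W b bd lam (es m) (ts m) (ks m) (js m)) xs)"
proof (induction xs arbitrary: g)
  case Nil
  then show ?case by (simp add: F_one)
next
  case (Cons x xs)
  then show ?case
    by (simp add: mult.assoc fop_mult_F[THEN mult_assoc_rewrite] add.assoc)
qed

lemma prod_list_F_upt: "prod_list (map (\<lambda>m. F (\<lambda>P. f m)) [0..<n]) = F (\<lambda>P. \<Prod>m<n. f m)"
  by (induction n) (simp_all add: F_one F_mult)

lemma prod_list_fop_mult_phase:
  "prod_list (map (\<lambda>m. fop F W b bd lam (es m) (ts m) (ks m) (js m)) [0..<c])
     * F (\<lambda>P. qsc lam \<tau> (omega_t k + k \<bullet> P)) =
   F (\<lambda>P. qsc lam \<tau> (omega_t k + k \<bullet> P) * (\<Prod>m<c. qsc lam \<tau> (k \<bullet> fop_shift (es m) (ks m))))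
     * prod_list (map (\<lambda>m. fop F W b bd lam (es m) (ts m) (ks m) (js m)) [0..<c])"
  by (simp add: prod_list_fop_mult_F interv_sum_list_conv_sum_set_nat atLeast0LessThan
      inner_add_right inner_sum_right qsc_add qsc_sum mult.assoc)

lemma prod_list_fop_contraction:
  fixes lam :: real and es :: "nat \<Rightarrow> bool" and ts :: "nat \<Rightarrow> real" and ks :: "nat \<Rightarrow> real^3"
    and js :: "nat \<Rightarrow> 3"
  assumes "c < N" and central: "\<And>X. d * X = X * d"
  defines "A m \<equiv> fop F W b bd lam (es m) (ts m) (ks m) (js m)"
  shows "F (\<lambda>P. s) * prod_list (map A [0..<c])
      * (d * F (\<lambda>P. complex_of_real (1 / lam^2)) * F (\<lambda>P. qsc lam \<tau> (omega_t k + k \<bullet> P)))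
      * prod_list (map A [Suc c..<N])
    = d * F (\<lambda>P. complex_of_real (1 / lam^2)) * F (\<lambda>P. qsc lam \<tau> (omega_t k + k \<bullet> P))
      * F (\<lambda>P. (\<Prod>m<c. qsc lam \<tau> (k \<bullet> fop_shift (es m) (ks m))) * s)
      * prod_list (map A (filter (\<lambda>m. m \<noteq> c) [0..<N]))"
proof -
  define \<Phi> where "\<Phi> = (\<lambda>P. qsc lam \<tau> (omega_t k + k \<bullet> P))"
  define \<phi> where "\<phi> = (\<Prod>m<c. qsc lam \<tau> (k \<bullet> fop_shift (es m) (ks m)))"
  let ?P = "prod_list (map A [0..<c])" and ?P' = "prod_list (map A [Suc c..<N])"
    and ?L = "F (\<lambda>P. complex_of_real (1 / lam^2))"
  have "?P * ?L = ?L * ?P"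
    unfolding A_def by (simp add: prod_list_fop_mult_F)
  then have phase: "?P * (?L * F \<Phi>) = ?L * F (\<lambda>P. \<Phi> P * \<phi>) * ?P"
    unfolding \<Phi>_def \<phi>_def A_def
    by (simp add: mult.assoc[symmetric]) (simp add: mult.assoc prod_list_fop_mult_phase)
  have scalars: "F (\<lambda>P. s) * (?L * F (\<lambda>P. \<Phi> P * \<phi>)) = ?L * F \<Phi> * F (\<lambda>P. \<phi> * s)"
    by (simp add: F_mult mult_ac)
  have "F (\<lambda>P. s) * ?P * (d * ?L * F \<Phi>) * ?P' = d * (F (\<lambda>P. s) * (?P * (?L * F \<Phi>)) * ?P')"
    by (simp add: mult.assoc[symmetric] central[of "F _ * ?P", symmetric])
  also have "\<dots> = d * (F (\<lambda>P. s) * (?L * F (\<lambda>P. \<Phi> P * \<phi>)) * (?P * ?P'))"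
    unfolding phase by (simp only: mult.assoc)
  also have "\<dots> = d * ?L * F \<Phi> * F (\<lambda>P. \<phi> * s) * (?P * ?P')"
    by (simp only: scalars mult.assoc)
  finally show ?thesis
    using assms by (simp add: \<Phi>_def \<phi>_def filter_upt_neq)
qed

lemma aL_commutator_fop_product:
  fixes lam t :: real and k :: "real^3" and j :: 3 and N :: nat
    and es :: "nat \<Rightarrow> bool" and ts :: "nat \<Rightarrow> real" and ks :: "nat \<Rightarrow> real^3" and js :: "nat \<Rightarrow> 3"
  defines "A m \<equiv> fop F W b bd lam (es m) (ts m) (ks m) (js m)"
    and "\<sigma> m \<equiv> inverse (qsc lam (t - ts m) (k \<bullet> fop_shift (es m) (ks m)))"
  shows "aL F W b lam t k j * prod_list (map A [0..<N])
      - F (\<lambda>P. \<Prod>m<N. \<sigma> m) * prod_list (map A [0..<N]) * aL F W b lam t k j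
    = (\<Sum>c | c < N \<and> es c.
        (if j = js c then D k (ks c) else 0) * F (\<lambda>P. complex_of_real (1 / lam^2))
        * F (\<lambda>P. qsc lam (t - ts c) (omega_t k + k \<bullet> P))
        * F (\<lambda>P. (\<Prod>m<c. qsc lam (t - ts c) (k \<bullet> fop_shift (es m) (ks m))) * (\<Prod>m<c. \<sigma> m))
        * prod_list (map A (filter (\<lambda>m. m \<noteq> c) [0..<N])))"
proof -
  define E where "E c = (if es c then (if j = js c then D k (ks c) else 0)
     * F (\<lambda>P. complex_of_real (1 / lam^2)) * F (\<lambda>P. qsc lam (t - ts c) (omega_t k + k \<bullet> P)) else 0)"
    for c
  have "aL F W b lam t k j * prod_list (map A [0..<N]) =
      prod_list (map (\<lambda>m. F (\<lambda>P. \<sigma> m)) [0..<N]) * prod_list (map A [0..<N]) * aL F W b lam t k j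
    + (\<Sum>c<N. prod_list (map (\<lambda>m. F (\<lambda>P. \<sigma> m)) [0..<c]) * prod_list (map A [0..<c]) * E c
              * prod_list (map A [Suc c..<N]))"
    (is "_ = _ + (\<Sum>c<N. ?T c)")
    by (rule twisted_commutator_prod_list)
      (simp_all add: A_def \<sigma>_def E_def aL_commute_fop fop_mult_F)
  moreover have "?T c = (if es c then (if j = js c then D k (ks c) else 0) * F (\<lambda>P. complex_of_real (1 / lam^2))
        * F (\<lambda>P. qsc lam (t - ts c) (omega_t k + k \<bullet> P))
        * F (\<lambda>P. (\<Prod>m<c. qsc lam (t - ts c) (k \<bullet> fop_shift (es m) (ks m))) * (\<Prod>m<c. \<sigma> m))
        * prod_list (map A (filter (\<lambda>m. m \<noteq> c) [0..<N])) else 0)"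
    if "c < N" for c
  proof (cases "es c")
    case True
    have central: "(if j = js c then D k (ks c) else 0) * X = X * (if j = js c then D k (ks c) else 0)"
      for X by (simp add: D_central)
    show ?thesis
      unfolding A_def E_def prod_list_F_upt if_P[OF True]
      by (rule prod_list_fop_contraction[OF that central])
  qed (simp add: E_def)
  ultimately show ?thesis
    by (simp add: prod_list_F_upt sum.inter_filter[symmetric])
qed

end

theorem lemma2:
  fixes F :: "(real^3 \<Rightarrow> complex) \<Rightarrow> 'A::ring_1"
    and W :: "real^3 \<Rightarrow> 'A" and b bd :: "3 \<Rightarrow> real^3 \<Rightarrow> 'A"
    and D :: "real^3 \<Rightarrow> real^3 \<Rightarrow> 'A"
    and lam t :: real and k :: "real^3" and j :: 3
    and N :: nat and es :: "nat \<Rightarrow> bool" and ts :: "nat \<Rightarrow> real"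
    and ks :: "nat \<Rightarrow> real^3" and js :: "nat \<Rightarrow> 3"
  assumes "ccr_model F W b bd D" and "lam > 0"
  defines "Ann \<equiv> {m. m < N \<and> \<not> es m}" and "Cre \<equiv> {m. m < N \<and> es m}"
    and "A m \<equiv> fop F W b bd lam (es m) (ts m) (ks m) (js m)"
  shows
   "aL F W b lam t k j * prod_list (map A [0..<N])
    - F (\<lambda>P. (\<Prod>m\<in>Ann. inverse (qsc lam (t - ts m) (k \<bullet> ks m))) *
              (\<Prod>m\<in>Cre. qsc lam (t - ts m) (k \<bullet> ks m)))
      * prod_list (map A [0..<N]) * aL F W b lam t k j
    = (\<Sum>c\<in>Cre.
        (if j = js c then D k (ks c) else 0)
        * F (\<lambda>P. complex_of_real (1 / lam^2))
        * F (\<lambda>P. qsc lam (t - ts c) (omega_t k + k \<bullet> P))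
        * F (\<lambda>P. (\<Prod>m\<in>{m\<in>Ann. m < c}. qsc lam (t - ts c) (k \<bullet> ks m))
                * (\<Prod>m\<in>{m\<in>Cre. m < c}. inverse (qsc lam (t - ts c) (k \<bullet> ks m)))
                * (\<Prod>m\<in>{m\<in>Ann. m < c}. inverse (qsc lam (t - ts m) (k \<bullet> ks m)))
                * (\<Prod>m\<in>{m\<in>Cre. m < c}. qsc lam (t - ts m) (k \<bullet> ks m)))
        * prod_list (map A (filter (\<lambda>m. m \<noteq> c) [0..<N])))"
proof -
  have A_eq: "A = (\<lambda>m. fop F W b bd lam (es m) (ts m) (ks m) (js m))"
    by (rule ext) (simp add: A_def)
  have Ann_Cre: "Ann = {..<N} \<inter> - Collect es" "Cre = {..<N} \<inter> Collect es"
    by (auto simp: Ann_def Cre_def)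
  have Ann_Cre_below: "{m \<in> Ann. m < c} = {..<c} \<inter> - Collect es" "{m \<in> Cre. m < c} = {..<c} \<inter> Collect es"
    if "c \<le> N" for c
    using that by (auto simp: Ann_def Cre_def)
  have twist: "(\<Prod>m<N. inverse (qsc lam (t - ts m) (k \<bullet> fop_shift (es m) (ks m))))
    = (\<Prod>m\<in>Ann. inverse (qsc lam (t - ts m) (k \<bullet> ks m))) * (\<Prod>m\<in>Cre. qsc lam (t - ts m) (k \<bullet> ks m))"
    by (simp add: Ann_Cre prod_qsc_fop_shift)
  have phase: "(\<Prod>m<c. qsc lam (t - ts c) (k \<bullet> fop_shift (es m) (ks m)))
      * (\<Prod>m<c. inverse (qsc lam (t - ts m) (k \<bullet> fop_shift (es m) (ks m))))
    = (\<Prod>m\<in>{m\<in>Ann. m < c}. qsc lam (t - ts c) (k \<bullet> ks m))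
      * (\<Prod>m\<in>{m\<in>Cre. m < c}. inverse (qsc lam (t - ts c) (k \<bullet> ks m)))
      * (\<Prod>m\<in>{m\<in>Ann. m < c}. inverse (qsc lam (t - ts m) (k \<bullet> ks m)))
      * (\<Prod>m\<in>{m\<in>Cre. m < c}. qsc lam (t - ts m) (k \<bullet> ks m))" if "c \<in> Cre" for c
    using that Ann_Cre_below[of c] by (simp add: Cre_def prod_qsc_fop_shift mult.assoc)
  show ?thesis
    unfolding A_eq twist[symmetric] aL_commutator_fop_product[OF assms(1)]
    by (rule sum.cong) (simp_all only: Cre_def phase)
qed

end
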